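(* Let $A\in\mathbb{R}^{n\times n}$ be irreducible and nonnegative. Then $r\big((1-t)A+tA^{\top}\big)$ is constant in $t\in[0,1]$ if and only if the Perron vector of $A+A^{\top}$ lies in the null space of $A-A^{\top}$.
   Context: $r(M)$ denotes the spectral radius of $M$. The Perron vector of an irreducible nonnegative matrix is its positive eigenvector (unique up to scaling) for the eigenvalue equal to its spectral radius. *)

theory Defs
  imports "Jordan_Normal_Form.Spectral_Radius"
begin

definition real_spectral_radius :: "real mat \<Rightarrow> real" where
  "real_spectral_radius M = spectral_radius (map_mat complex_of_real M)"

definition nonneg_mat :: "real mat \<Rightarrow> bool" where
  "nonneg_mat M \<longleftrightarrow> (\<forall>i < dim_row M. \<forall>j < dim_col M. M $$ (i,j) \<ge> 0)"

definition irreducible_mat :: "real mat \<Rightarrow> bool" where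
  "irreducible_mat M \<longleftrightarrow> (\<exists>n. M \<in> carrier_mat n n \<and> n > 0 \<and>
     (\<forall>i < n. \<forall>j < n. i \<noteq> j \<longrightarrow>
        (i, j) \<in> {(k, l). k < n \<and> l < n \<and> M $$ (k, l) \<noteq> 0}\<^sup>+))"

definition perron_vector :: "real mat \<Rightarrow> real vec \<Rightarrow> bool" where
  "perron_vector M v \<longleftrightarrow> v \<in> carrier_vec (dim_col M) \<and> (\<forall>i < dim_vec v. v $ i > 0) \<and>
     M *\<^sub>v v = real_spectral_radius M \<cdot>\<^sub>v v"

end

theory Submission
  imports Defs "HOL-Analysis.Function_Topology"
begin

text \<open>
  Let \<open>S = A + A\<^sup>T\<close> have Perron vector \<open>v\<close>, so \<open>S v = 2 c v\<close> with \<open>2 c = r(S)\<close>. A positive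
  eigenvector of a nonnegative matrix belongs to its spectral radius, so \<open>r(S/2) = c\<close>. If
  \<open>A v = A\<^sup>T v\<close>, then \<open>A v = c v\<close> and \<open>v\<close> is a positive eigenvector of every
  \<open>(1 - t) A + t A\<^sup>T\<close>, whose spectral radius is therefore \<open>c\<close>.

  Conversely, suppose \<open>r(A) = c\<close>. The moduli \<open>y\<close> of an eigenvector of \<open>A\<close> for an eigenvalue
  of modulus \<open>c\<close> satisfy \<open>c y \<le> A y\<close>, hence \<open>c |y|\<^sup>2 \<le> y\<^sup>T A y\<close>. On the other hand
  \<open>\<Sum>\<^sub>i\<^sub>j a\<^sub>i\<^sub>j v\<^sub>i v\<^sub>j (y\<^sub>i/v\<^sub>i - y\<^sub>j/v\<^sub>j)\<^sup>2 = 2 (c |y|\<^sup>2 - y\<^sup>T A y)\<close>, so \<open>y/v\<close> is constant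
  along the edges of \<open>A\<close>, hence constant by irreducibility; then \<open>c v \<le> A v\<close>, and since
  \<open>v\<^sup>T A v = c |v|\<^sup>2\<close> this forces \<open>A v = c v = A\<^sup>T v\<close>.

  The Perron vector of the symmetric matrix \<open>S\<close> exists because the quadratic form of \<open>S\<close> attains
  its maximum on the unit sphere at a nonnegative vector, which is an eigenvector by a first
  order perturbation argument and positive by irreducibility.
\<close>

lemma mult_mat_vec_nth_sum:
  assumes "A \<in> carrier_mat n n" "v \<in> carrier_vec n" "i < n"
  shows "(A *\<^sub>v v) $ i = (\<Sum>j<n. A $$ (i,j) * v $ j)"
  using assms by (auto simp: scalar_prod_def lessThan_atLeast0 intro!: sum.cong)

lemma mult_mat_vec_eq_smult_iff:
  assumes "A \<in> carrier_mat n n" "v \<in> carrier_vec n"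
  shows "A *\<^sub>v v = c \<cdot>\<^sub>v v \<longleftrightarrow> (\<forall>i<n. (\<Sum>j<n. A $$ (i,j) * v $ j) = c * v $ i)"
  unfolding vec_eq_iff using assms by (simp add: mult_mat_vec_nth_sum del: index_mult_mat_vec)

lemma add_transpose_mult_vec_eq_smult_iff:
  fixes A :: "real mat"
  assumes A: "A \<in> carrier_mat n n" and v: "v \<in> carrier_vec n"
  shows "(A + A\<^sup>T) *\<^sub>v v = c \<cdot>\<^sub>v v \<longleftrightarrow> (\<forall>i<n. (\<Sum>j<n. (A $$ (i,j) + A $$ (j,i)) * v $ j) = c * v $ i)"
proof -
  have "(\<Sum>j<n. (A + A\<^sup>T) $$ (i,j) * v $ j) = (\<Sum>j<n. (A $$ (i,j) + A $$ (j,i)) * v $ j)" if "i < n" for i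
    using A that by (intro sum.cong) auto
  then show ?thesis
    using A v by (simp add: mult_mat_vec_eq_smult_iff[of _ n])
qed

lemma transpose_combination_mult_vec_nth:
  fixes A :: "real mat"
  assumes "A \<in> carrier_mat n n" "v \<in> carrier_vec n" "i < n"
  shows "((\<alpha> \<cdot>\<^sub>m A + \<beta> \<cdot>\<^sub>m A\<^sup>T) *\<^sub>v v) $ i = \<alpha> * (A *\<^sub>v v) $ i + \<beta> * (A\<^sup>T *\<^sub>v v) $ i"
  using assms
  by (simp add: mult_mat_vec_nth_sum[of _ n] sum.distrib sum_distrib_left algebra_simps
      del: index_mult_mat_vec)

lemma add_transpose_mult_vec_nth:
  fixes A :: "real mat"
  assumes "A \<in> carrier_mat n n" "v \<in> carrier_vec n" "i < n"
  shows "((A + A\<^sup>T) *\<^sub>v v) $ i = (A *\<^sub>v v) $ i + (A\<^sup>T *\<^sub>v v) $ i"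
    and "((A - A\<^sup>T) *\<^sub>v v) $ i = (A *\<^sub>v v) $ i - (A\<^sup>T *\<^sub>v v) $ i"
  using assms by (simp_all add: add_mult_distrib_mat_vec minus_mult_distrib_mat_vec)

section \<open>Nonnegative irreducible matrices\<close>

lemma nonneg_matD:
  "nonneg_mat A \<Longrightarrow> A \<in> carrier_mat n n \<Longrightarrow> i < n \<Longrightarrow> j < n \<Longrightarrow> 0 \<le> A $$ (i,j)"
  unfolding nonneg_mat_def by auto

lemma nonneg_mat_transpose_combination:
  assumes "A \<in> carrier_mat n n" and "nonneg_mat A" and "t \<in> {0..1}"
  shows "nonneg_mat ((1 - t) \<cdot>\<^sub>m A + t \<cdot>\<^sub>m A\<^sup>T)"
  using assms unfolding nonneg_mat_def by auto

lemma irreducible_mat_dim_pos: "irreducible_mat A \<Longrightarrow> A \<in> carrier_mat n n \<Longrightarrow> 0 < n"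
  unfolding irreducible_mat_def by auto

lemma irreducible_mat_propagate:
  assumes A: "A \<in> carrier_mat n n" and irr: "irreducible_mat A"
    and step: "\<And>a b. a < n \<Longrightarrow> b < n \<Longrightarrow> A $$ (a,b) \<noteq> 0 \<Longrightarrow> P a \<Longrightarrow> P b"
    and i: "i < n" and j: "j < n" and Pi: "P i"
  shows "P j"
proof (cases "i = j")
  case False
  with irr A i j have "(i, j) \<in> {(k, l). k < n \<and> l < n \<and> A $$ (k, l) \<noteq> 0}\<^sup>+"
    unfolding irreducible_mat_def by auto
  then show ?thesis
    using Pi by (induction rule: trancl_induct) (auto intro: step)
qed (use Pi in simp)

lemma irreducible_mat_mono:
  assumes A: "A \<in> carrier_mat n n" and B: "B \<in> carrier_mat n n" and irr: "irreducible_mat A"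
    and supp: "\<And>i j. i < n \<Longrightarrow> j < n \<Longrightarrow> A $$ (i,j) \<noteq> 0 \<Longrightarrow> B $$ (i,j) \<noteq> 0"
  shows "irreducible_mat B"
proof -
  have sub: "{(k, l). k < n \<and> l < n \<and> A $$ (k, l) \<noteq> 0}\<^sup>+
      \<subseteq> {(k, l). k < n \<and> l < n \<and> B $$ (k, l) \<noteq> 0}\<^sup>+"
    using supp by (intro trancl_mono_subset) auto
  from irr A have "0 < n" and "\<forall>i<n. \<forall>j<n. i \<noteq> j \<longrightarrow>
      (i, j) \<in> {(k, l). k < n \<and> l < n \<and> A $$ (k, l) \<noteq> 0}\<^sup>+"
    unfolding irreducible_mat_def by auto
  with sub B show ?thesis
    unfolding irreducible_mat_def by (intro exI[of _ n]) auto
qed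

lemma nonneg_irreducible_add_transpose:
  fixes A :: "real mat"
  assumes A: "A \<in> carrier_mat n n" and nn: "nonneg_mat A" and irr: "irreducible_mat A"
  shows "nonneg_mat (A + A\<^sup>T)" and "irreducible_mat (A + A\<^sup>T)"
proof -
  show "nonneg_mat (A + A\<^sup>T)"
    using A nn unfolding nonneg_mat_def by auto
  have "A $$ (i,j) + A $$ (j,i) \<noteq> 0" if "i < n" "j < n" "A $$ (i,j) \<noteq> 0" for i j
    using nonneg_matD[OF nn A that(1,2)] nonneg_matD[OF nn A that(2,1)] that(3) by linarith
  then show "irreducible_mat (A + A\<^sup>T)"
    using A by (intro irreducible_mat_mono[OF A _ irr]) auto
qed

lemma irreducible_nonneg_eigenvector_pos:
  fixes M :: "real mat" and y :: "nat \<Rightarrow> real"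
  assumes M: "M \<in> carrier_mat n n" and nn: "nonneg_mat M" and irr: "irreducible_mat M"
    and y_nonneg: "\<And>i. 0 \<le> y i" and k: "k < n" "y k \<noteq> 0"
    and eig: "\<And>i. i < n \<Longrightarrow> (\<Sum>j<n. M $$ (i,j) * y j) = \<rho> * y i"
    and i: "i < n"
  shows "0 < y i"
proof (rule ccontr)
  assume "\<not> 0 < y i"
  then have "y i = 0"
    using y_nonneg[of i] by simp
  have "y k = 0"
  proof (rule irreducible_mat_propagate[OF M irr _ i k(1), of "\<lambda>a. y a = 0"])
    fix a b assume a: "a < n" and b: "b < n" and ab: "M $$ (a,b) \<noteq> 0" and "y a = 0"
    then have "(\<Sum>j<n. M $$ (a,j) * y j) = 0"
      using eig[OF a] by simp
    then have "M $$ (a,b) * y b = 0"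
      using b nonneg_matD[OF nn M a] y_nonneg by (subst (asm) sum_nonneg_eq_0_iff) auto
    then show "y b = 0"
      using ab by simp
  qed fact
  then show False
    using k(2) by simp
qed

section \<open>Positive eigenvectors and the spectral radius\<close>

lemma nonneg_mat_eigenvector_norm_le:
  fixes A :: "real mat" and z :: "complex vec"
  assumes A: "A \<in> carrier_mat n n" and nn: "nonneg_mat A" and z: "z \<in> carrier_vec n"
    and ev: "map_mat complex_of_real A *\<^sub>v z = \<mu> \<cdot>\<^sub>v z" and i: "i < n"
  shows "cmod \<mu> * cmod (z $ i) \<le> (\<Sum>j<n. A $$ (i,j) * cmod (z $ j))"
proof -
  have "\<mu> * z $ i = (\<Sum>j<n. complex_of_real (A $$ (i,j)) * z $ j)"
    using arg_cong[OF ev, of "\<lambda>w. w $ i"] A z i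
    by (simp add: mult_mat_vec_nth_sum[of _ n] del: index_mult_mat_vec)
  then have "cmod \<mu> * cmod (z $ i) \<le> (\<Sum>j<n. cmod (complex_of_real (A $$ (i,j)) * z $ j))"
    by (metis norm_mult norm_sum)
  also have "\<dots> = (\<Sum>j<n. A $$ (i,j) * cmod (z $ j))"
    using nonneg_matD[OF nn A i] by (simp add: norm_mult)
  finally show ?thesis .
qed

lemma eigenvalue_norm_le_of_positive_eigenvector:
  fixes A :: "real mat"
  assumes A: "A \<in> carrier_mat n n" and nn: "nonneg_mat A"
    and v: "v \<in> carrier_vec n" and pos: "\<And>i. i < n \<Longrightarrow> 0 < v $ i"
    and Av: "A *\<^sub>v v = \<rho> \<cdot>\<^sub>v v"
    and \<mu>: "eigenvalue (map_mat complex_of_real A) \<mu>"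
  shows "cmod \<mu> \<le> \<rho>"
proof -
  obtain z where z: "z \<in> carrier_vec n" and "z \<noteq> 0\<^sub>v n"
    and zev: "map_mat complex_of_real A *\<^sub>v z = \<mu> \<cdot>\<^sub>v z"
    using \<mu> A unfolding eigenvalue_def eigenvector_def by auto
  then obtain k where k: "k < n" "z $ k \<noteq> 0" by (auto simp: vec_eq_iff)
  define R where "R j = cmod (z $ j) / v $ j" for j
  obtain i where i: "i < n" and R_max: "\<And>j. j < n \<Longrightarrow> R j \<le> R i"
    using Max_in[of "R ` {..<n}"] Max_ge[of "R ` {..<n}"] k(1) by fastforce
  have z_le: "cmod (z $ j) \<le> R i * v $ j" if "j < n" for j
    using R_max[OF that] pos[OF that] by (simp add: R_def divide_le_eq)
  have "0 < R k"
    using k pos by (simp add: R_def)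
  then have "0 < R i"
    using R_max[OF k(1)] by linarith
  then have zi_pos: "0 < cmod (z $ i)"
    using pos[OF i] by (simp add: R_def zero_less_divide_iff)
  have "cmod \<mu> * cmod (z $ i) \<le> (\<Sum>j<n. A $$ (i,j) * cmod (z $ j))"
    by (rule nonneg_mat_eigenvector_norm_le[OF A nn z zev i])
  also have "\<dots> \<le> (\<Sum>j<n. A $$ (i,j) * (R i * v $ j))"
    using z_le nonneg_matD[OF nn A i] by (intro sum_mono mult_left_mono) auto
  also have "\<dots> = R i * (\<Sum>j<n. A $$ (i,j) * v $ j)"
    by (simp add: sum_distrib_left mult.left_commute)
  also have "\<dots> = R i * (\<rho> * v $ i)"
    using Av A v i by (simp add: mult_mat_vec_eq_smult_iff)
  also have "\<dots> = \<rho> * cmod (z $ i)"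
    using pos[OF i] by (simp add: R_def)
  finally show ?thesis
    using zi_pos by simp
qed

lemma real_spectral_radius_eq_positive_eigenvalue:
  fixes A :: "real mat"
  assumes A: "A \<in> carrier_mat n n" and nn: "nonneg_mat A"
    and v: "v \<in> carrier_vec n" and pos: "\<And>i. i < n \<Longrightarrow> 0 < v $ i"
    and Av: "A *\<^sub>v v = \<rho> \<cdot>\<^sub>v v" and n: "0 < n"
  shows "real_spectral_radius A = \<rho>"
proof -
  let ?B = "map_mat complex_of_real A"
  have "v \<noteq> 0\<^sub>v n"
    using pos[OF n] v n by (auto simp: vec_eq_iff)
  then have "eigenvalue A \<rho>"
    using A v Av unfolding eigenvalue_def eigenvector_def by auto
  then have \<rho>: "complex_of_real \<rho> \<in> spectrum ?B"
    using of_real_hom.eigenvalue_hom[OF A] by (simp add: spectrum_def)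
  have le: "cmod \<mu> \<le> \<rho>" if "\<mu> \<in> spectrum ?B" for \<mu>
    using eigenvalue_norm_le_of_positive_eigenvector[OF A nn v pos Av] that
    by (simp add: spectrum_def)
  have "Max (cmod ` spectrum ?B) = \<rho>"
  proof (rule Max_eqI)
    show "finite (cmod ` spectrum ?B)"
      using card_finite_spectrum(1)[of ?B n] A by simp
    show "y \<le> \<rho>" if "y \<in> cmod ` spectrum ?B" for y
      using le that by auto
    show "\<rho> \<in> cmod ` spectrum ?B"
      using \<rho> le[OF \<rho>] by (intro image_eqI[of _ _ "complex_of_real \<rho>"]) auto
  qed
  then show ?thesis
    unfolding real_spectral_radius_def spectral_radius_def .
qed

lemma nonneg_mat_spectral_radius_subinvariant:
  fixes A :: "real mat"
  assumes A: "A \<in> carrier_mat n n" and nn: "nonneg_mat A" and n: "0 < n"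
  obtains y k where "k < n" "y k \<noteq> 0" "\<And>i. 0 \<le> y i"
    "\<And>i. i < n \<Longrightarrow> real_spectral_radius A * y i \<le> (\<Sum>j<n. A $$ (i,j) * y j)"
proof -
  let ?B = "map_mat complex_of_real A"
  have "real_spectral_radius A \<in> cmod ` spectrum ?B"
    unfolding real_spectral_radius_def using A n by (intro spectral_radius_mem_max(1)) auto
  then obtain \<mu> z where \<mu>: "real_spectral_radius A = cmod \<mu>" and z: "z \<in> carrier_vec n" "z \<noteq> 0\<^sub>v n"
    and zev: "?B *\<^sub>v z = \<mu> \<cdot>\<^sub>v z"
    using A unfolding spectrum_def eigenvalue_def eigenvector_def by auto
  obtain k where "k < n" "z $ k \<noteq> 0"
    using z by (auto simp: vec_eq_iff)
  then show thesis
    using nonneg_mat_eigenvector_norm_le[OF A nn z(1) zev] \<mu>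
    by (intro that[of k "\<lambda>i. cmod (z $ i)"]) auto
qed

section \<open>Existence of the Perron vector of a symmetric matrix\<close>

definition quadratic_form :: "nat \<Rightarrow> real mat \<Rightarrow> (nat \<Rightarrow> real) \<Rightarrow> real" where
  "quadratic_form n M x = (\<Sum>i<n. \<Sum>j<n. M $$ (i,j) * x i * x j)"

lemma quadratic_form_scale: "quadratic_form n M (\<lambda>i. s * x i) = s^2 * quadratic_form n M x"
  unfolding quadratic_form_def by (simp add: sum_distrib_left power2_eq_square mult_ac)

lemma quadratic_form_le_abs:
  assumes M: "M \<in> carrier_mat n n" and nn: "nonneg_mat M"
  shows "quadratic_form n M x \<le> quadratic_form n M (\<lambda>i. \<bar>x i\<bar>)"
  unfolding quadratic_form_def
proof (intro sum_mono)
  fix i j assume "i \<in> {..<n}" "j \<in> {..<n}"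
  then have "0 \<le> M $$ (i,j)"
    using nonneg_matD[OF nn M] by simp
  then have "M $$ (i,j) * (x i * x j) \<le> M $$ (i,j) * (\<bar>x i\<bar> * \<bar>x j\<bar>)"
    by (intro mult_left_mono) (auto simp: abs_mult[symmetric])
  then show "M $$ (i,j) * x i * x j \<le> M $$ (i,j) * \<bar>x i\<bar> * \<bar>x j\<bar>"
    by (simp add: mult.assoc)
qed

lemma sum_delta_mult:
  fixes f :: "nat \<Rightarrow> real"
  assumes "k < n"
  shows "(\<Sum>i<n. (if i = k then t else 0) * f i) = t * f k"
proof -
  have "(\<Sum>i<n. (if i = k then t else 0) * f i) = (\<Sum>i<n. if i = k then t * f i else 0)"
    by (rule sum.cong) auto
  then show ?thesis
    using assms by simp
qed

lemma quadratic_form_add_delta: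
  fixes M :: "real mat"
  assumes sym: "\<And>i j. i < n \<Longrightarrow> j < n \<Longrightarrow> M $$ (i,j) = M $$ (j,i)" and k: "k < n"
  shows "quadratic_form n M (\<lambda>i. y i + (if i = k then t else 0))
       = quadratic_form n M y + 2 * t * (\<Sum>j<n. M $$ (k,j) * y j) + t^2 * M $$ (k,k)"
proof -
  define d where "d i = (if i = k then t else 0)" for i
  have "quadratic_form n M (\<lambda>i. y i + d i) = quadratic_form n M y
      + (\<Sum>i<n. \<Sum>j<n. d j * (M $$ (i,j) * y i)) + (\<Sum>i<n. d i * (\<Sum>j<n. M $$ (i,j) * y j))
      + (\<Sum>i<n. d i * (\<Sum>j<n. d j * M $$ (i,j)))"
    unfolding quadratic_form_def by (simp add: algebra_simps sum.distrib sum_distrib_left)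
  also have "(\<Sum>i<n. \<Sum>j<n. d j * (M $$ (i,j) * y i)) = (\<Sum>j<n. d j * (\<Sum>i<n. M $$ (j,i) * y i))"
    using sym by (subst sum.swap) (simp add: sum_distrib_left)
  also have "\<dots> = t * (\<Sum>j<n. M $$ (k,j) * y j)"
    unfolding d_def by (rule sum_delta_mult[OF k])
  also have "(\<Sum>i<n. d i * (\<Sum>j<n. d j * M $$ (i,j))) = t^2 * M $$ (k,k)"
    unfolding d_def sum_delta_mult[OF k] by (simp add: power2_eq_square)
  finally show ?thesis
    by (simp add: d_def)
qed

lemma nonneg_quadratic_imp_linear_coeff_zero:
  fixes a b :: real
  assumes nonneg: "\<And>t. 0 \<le> 2 * t * b + t^2 * a"
  shows "b = 0"
proof -
  define t where "t = - b / (\<bar>a\<bar> + 1)"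
  have t: "t * (\<bar>a\<bar> + 1) = - b"
    by (simp add: t_def)
  have "0 \<le> (2 * t * b + t^2 * a) * (\<bar>a\<bar> + 1)^2"
    using nonneg by simp
  also have "\<dots> = 2 * b * (t * (\<bar>a\<bar> + 1)) * (\<bar>a\<bar> + 1) + a * (t * (\<bar>a\<bar> + 1))^2"
    by (simp add: power2_eq_square algebra_simps)
  also have "\<dots> = b^2 * (a - 2 * (\<bar>a\<bar> + 1))"
    unfolding t by (simp add: power2_eq_square algebra_simps)
  finally have "0 \<le> b^2 * (a - 2 * (\<bar>a\<bar> + 1))" .
  moreover have "a - 2 * (\<bar>a\<bar> + 1) < 0"
    by (simp add: abs_if)
  ultimately have "b^2 \<le> 0"
    by (simp add: zero_le_mult_iff)
  then show ?thesis
    by simp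
qed

lemma quadratic_form_max_imp_eigen:
  fixes M :: "real mat"
  assumes sym: "\<And>i j. i < n \<Longrightarrow> j < n \<Longrightarrow> M $$ (i,j) = M $$ (j,i)"
    and le: "\<And>x. quadratic_form n M x \<le> \<rho> * (\<Sum>i<n. (x i)^2)"
    and eq: "quadratic_form n M y = \<rho> * (\<Sum>i<n. (y i)^2)"
    and k: "k < n"
  shows "(\<Sum>j<n. M $$ (k,j) * y j) = \<rho> * y k"
proof -
  have "0 \<le> 2 * t * (\<rho> * y k - (\<Sum>j<n. M $$ (k,j) * y j)) + t^2 * (\<rho> - M $$ (k,k))" for t
  proof -
    have "(\<Sum>i<n. (y i + (if i = k then t else 0))^2)
        = (\<Sum>i<n. (y i)^2) + (\<Sum>i<n. (if i = k then 2 * t * y k + t^2 else 0))"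
      unfolding sum.distrib[symmetric] by (intro sum.cong) (auto simp: power2_sum)
    also have "\<dots> = (\<Sum>i<n. (y i)^2) + 2 * t * y k + t^2"
      using k by simp
    finally have "(\<Sum>i<n. (y i + (if i = k then t else 0))^2) = (\<Sum>i<n. (y i)^2) + 2 * t * y k + t^2" .
    then show ?thesis
      using le[of "\<lambda>i. y i + (if i = k then t else 0)"] quadratic_form_add_delta[OF sym k, of y t] eq
      by (simp add: algebra_simps)
  qed
  then show ?thesis
    using nonneg_quadratic_imp_linear_coeff_zero by fastforce
qed

lemma quadratic_form_attains_max_on_sphere:
  assumes n: "0 < n"
  obtains x0 where "(\<Sum>i<n. (x0 i)^2) = 1"
    and "\<And>x. (\<Sum>i<n. (x i)^2) = 1 \<Longrightarrow> quadratic_form n M x \<le> quadratic_form n M x0"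
proof -
  \<comment> \<open>Coordinates from \<open>n\<close> on are irrelevant, so it suffices to search the compact set of
    \<open>[-1,1]\<close>-valued points of the sphere in the product topology.\<close>
  define K where "K = {x \<in> topspace (powertop_real UNIV). (\<Sum>i<n. (x i)^2) \<in> {1}}
      \<inter> (UNIV \<rightarrow>\<^sub>E {-1..1::real})"
  have "continuous_map (powertop_real UNIV) euclideanreal (\<lambda>x. \<Sum>i<n. (x i)^2)"
    by (intro continuous_intros) auto
  then have "closedin (powertop_real UNIV) {x \<in> topspace (powertop_real UNIV). (\<Sum>i<n. (x i)^2) \<in> {1}}"
    by (rule closedin_continuous_map_preimage) simp
  then have "compactin (powertop_real UNIV) K"
    unfolding K_def by (rule closed_Int_compactin) (simp add: compactin_PiE)
  moreover have "continuous_map (powertop_real UNIV) euclideanreal (quadratic_form n M)"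
    unfolding quadratic_form_def by (intro continuous_intros) auto
  ultimately have "compact (quadratic_form n M ` K)"
    using image_compactin by fastforce
  moreover have "(\<lambda>i. if i = 0 then 1 else 0) \<in> K"
  proof -
    have "(\<Sum>i<n. (if i = 0 then 1 else 0::real)^2) = (\<Sum>i<n. if i = 0 then 1 else 0)"
      by (rule sum.cong) auto
    then show ?thesis
      using n by (auto simp: K_def)
  qed
  ultimately obtain x0 where x0: "x0 \<in> K"
    and max: "\<And>x. x \<in> K \<Longrightarrow> quadratic_form n M x \<le> quadratic_form n M x0"
    using compact_attains_sup[of "quadratic_form n M ` K"] by blast
  show thesis
  proof
    show "(\<Sum>i<n. (x0 i)^2) = 1"
      using x0 by (simp add: K_def)
  next
    fix x :: "nat \<Rightarrow> real" assume x: "(\<Sum>i<n. (x i)^2) = 1"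
    define x' where "x' i = (if i < n then x i else 0)" for i
    have "(x i)^2 \<le> 1" if "i < n" for i
      using member_le_sum[of i "{..<n}" "\<lambda>i. (x i)^2"] x that by simp
    then have "x' \<in> K"
      using x by (auto simp: K_def x'_def abs_square_le_1 abs_le_iff)
    moreover have "quadratic_form n M x' = quadratic_form n M x"
      unfolding quadratic_form_def x'_def by simp
    ultimately show "quadratic_form n M x \<le> quadratic_form n M x0"
      using max by metis
  qed
qed

lemma quadratic_form_le_of_sphere_bound:
  assumes sphere: "\<And>x. (\<Sum>i<n. (x i)^2) = 1 \<Longrightarrow> quadratic_form n M x \<le> \<rho>"
  shows "quadratic_form n M x \<le> \<rho> * (\<Sum>i<n. (x i)^2)"
proof (cases "(\<Sum>i<n. (x i)^2) = 0")
  case True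
  then have "\<forall>i<n. x i = 0"
    by (simp add: sum_nonneg_eq_0_iff)
  then show ?thesis
    using True by (simp add: quadratic_form_def)
next
  case False
  define s where "s = sqrt (\<Sum>i<n. (x i)^2)"
  have pos: "0 < (\<Sum>i<n. (x i)^2)"
    using False by (metis less_eq_real_def sum_nonneg zero_le_power2)
  then have s2: "s^2 = (\<Sum>i<n. (x i)^2)" and "0 < s"
    by (simp_all add: s_def)
  have "(\<Sum>i<n. ((1/s) * x i)^2) = 1"
    using s2 False by (simp add: power_mult_distrib power_divide sum_divide_distrib[symmetric])
  then have "(1/s)^2 * quadratic_form n M x \<le> \<rho>"
    using sphere quadratic_form_scale by metis
  then show ?thesis
    using s2 pos by (simp add: power_divide pos_divide_le_eq mult.commute)
qed

lemma perron_vector_exists_symmetric: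
  fixes M :: "real mat"
  assumes M: "M \<in> carrier_mat n n" and nn: "nonneg_mat M" and irr: "irreducible_mat M"
    and sym: "M\<^sup>T = M"
  obtains v where "perron_vector M v"
proof -
  have n: "0 < n"
    using irreducible_mat_dim_pos[OF irr M] .
  have sym': "M $$ (i,j) = M $$ (j,i)" if "i < n" "j < n" for i j
    using arg_cong[OF sym, of "\<lambda>B. B $$ (j,i)"] M that by simp
  obtain x0 where x0: "(\<Sum>i<n. (x0 i)^2) = 1"
    and max: "\<And>x. (\<Sum>i<n. (x i)^2) = 1 \<Longrightarrow> quadratic_form n M x \<le> quadratic_form n M x0"
    using quadratic_form_attains_max_on_sphere[OF n] by blast
  define \<rho> where "\<rho> = quadratic_form n M x0"
  define y where "y = (\<lambda>i. \<bar>x0 i\<bar>)"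
  have y_sphere: "(\<Sum>i<n. (y i)^2) = 1"
    using x0 by (simp add: y_def)
  have Qy: "quadratic_form n M y = \<rho> * (\<Sum>i<n. (y i)^2)"
    using max[OF y_sphere] quadratic_form_le_abs[OF M nn, of x0] y_sphere
    by (simp add: \<rho>_def y_def)
  have le: "quadratic_form n M x \<le> \<rho> * (\<Sum>i<n. (x i)^2)" for x
    by (rule quadratic_form_le_of_sphere_bound) (simp add: max \<rho>_def)
  have eig: "(\<Sum>j<n. M $$ (i,j) * y j) = \<rho> * y i" if "i < n" for i
    by (rule quadratic_form_max_imp_eigen[OF sym' le Qy that])
  obtain k where k: "k < n" "y k \<noteq> 0"
    using y_sphere by (metis (no_types, lifting) lessThan_iff sum.neutral zero_neq_one zero_power2)
  have pos: "0 < y i" if "i < n" for i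
    using irreducible_nonneg_eigenvector_pos[OF M nn irr _ k eig that] by (simp add: y_def)
  define v where "v = vec n y"
  have v: "v \<in> carrier_vec n" and v_pos: "\<And>i. i < n \<Longrightarrow> 0 < v $ i"
    using pos by (simp_all add: v_def)
  have Mv: "M *\<^sub>v v = \<rho> \<cdot>\<^sub>v v"
    using eig M v by (simp add: mult_mat_vec_eq_smult_iff v_def)
  have "real_spectral_radius M = \<rho>"
    by (rule real_spectral_radius_eq_positive_eigenvalue[OF M nn v v_pos Mv n])
  then have "perron_vector M v"
    unfolding perron_vector_def using M v v_pos Mv by simp
  then show thesis ..
qed

section \<open>Eigenvectors of the symmetric part\<close>

lemma add_transpose_eigen_weighted_identity:
  fixes A :: "real mat" and x y :: "nat \<Rightarrow> real"
  assumes x: "\<And>i. i < n \<Longrightarrow> x i \<noteq> 0"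
    and eig: "\<And>i. i < n \<Longrightarrow> (\<Sum>j<n. (A $$ (i,j) + A $$ (j,i)) * x j) = 2 * c * x i"
  shows "(\<Sum>i<n. \<Sum>j<n. A $$ (i,j) * x i * x j * (y i / x i - y j / x j)^2)
       = 2 * (c * (\<Sum>i<n. (y i)^2) - quadratic_form n A y)"
proof -
  define u where "u i = (y i)^2 / x i" for i
  have "A $$ (i,j) * x i * x j * (y i / x i - y j / x j)^2
      = u i * (A $$ (i,j) * x j) + u j * (A $$ (i,j) * x i) - 2 * (A $$ (i,j) * y i * y j)"
    if "i < n" "j < n" for i j
    using x[OF that(1)] x[OF that(2)] unfolding u_def by (simp add: field_simps power2_eq_square)
  then have "(\<Sum>i<n. \<Sum>j<n. A $$ (i,j) * x i * x j * (y i / x i - y j / x j)^2)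
      = (\<Sum>i<n. \<Sum>j<n. u i * (A $$ (i,j) * x j)) + (\<Sum>i<n. \<Sum>j<n. u j * (A $$ (i,j) * x i))
        - 2 * quadratic_form n A y"
    by (simp add: quadratic_form_def sum.distrib sum_subtractf sum_distrib_left)
  also have "(\<Sum>i<n. \<Sum>j<n. u j * (A $$ (i,j) * x i)) = (\<Sum>i<n. \<Sum>j<n. u i * (A $$ (j,i) * x j))"
    by (rule sum.swap)
  also have "(\<Sum>i<n. \<Sum>j<n. u i * (A $$ (i,j) * x j)) + (\<Sum>i<n. \<Sum>j<n. u i * (A $$ (j,i) * x j))
      = (\<Sum>i<n. u i * (\<Sum>j<n. (A $$ (i,j) + A $$ (j,i)) * x j))"
    by (simp add: sum.distrib sum_distrib_left distrib_left distrib_right)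
  also have "\<dots> = (\<Sum>i<n. 2 * c * (y i)^2)"
    using x by (intro sum.cong refl) (simp add: eig u_def power2_eq_square)
  finally show ?thesis
    by (simp add: sum_distrib_left mult.assoc)
qed

lemma quadratic_form_eq_of_add_transpose_eigen:
  fixes A :: "real mat" and x :: "nat \<Rightarrow> real"
  assumes x: "\<And>i. i < n \<Longrightarrow> x i \<noteq> 0"
    and eig: "\<And>i. i < n \<Longrightarrow> (\<Sum>j<n. (A $$ (i,j) + A $$ (j,i)) * x j) = 2 * c * x i"
  shows "quadratic_form n A x = c * (\<Sum>i<n. (x i)^2)"
  using add_transpose_eigen_weighted_identity[OF x eig, of x] x by simp

lemma ratio_constant_of_add_transpose_eigen:
  fixes A :: "real mat" and x y :: "nat \<Rightarrow> real"
  assumes A: "A \<in> carrier_mat n n" and nn: "nonneg_mat A" and irr: "irreducible_mat A"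
    and x: "\<And>i. i < n \<Longrightarrow> 0 < x i"
    and eig: "\<And>i. i < n \<Longrightarrow> (\<Sum>j<n. (A $$ (i,j) + A $$ (j,i)) * x j) = 2 * c * x i"
    and super: "c * (\<Sum>i<n. (y i)^2) \<le> quadratic_form n A y"
    and i: "i < n" and j: "j < n"
  shows "y i / x i = y j / x j"
proof -
  define w where "w i = y i / x i" for i
  define d where "d i j = A $$ (i,j) * x i * x j * (w i - w j)^2" for i j
  have d_nonneg: "0 \<le> d a b" if "a < n" "b < n" for a b
    using nonneg_matD[OF nn A that] x that by (simp add: d_def less_imp_le)
  have "(\<Sum>a<n. \<Sum>b<n. d a b) \<le> 0"
    using add_transpose_eigen_weighted_identity[of n x A c y] x eig super
    by (simp add: d_def w_def less_imp_neq[symmetric])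
  then have "(\<Sum>a<n. \<Sum>b<n. d a b) = 0"
    using d_nonneg by (intro antisym sum_nonneg) auto
  then have row0: "(\<Sum>b<n. d a b) = 0" if "a < n" for a
    using d_nonneg that by (subst (asm) sum_nonneg_eq_0_iff) (auto intro: sum_nonneg)
  have d0: "d a b = 0" if "a < n" "b < n" for a b
    using row0[OF that(1)] d_nonneg[OF that(1)] that(2) by (subst (asm) sum_nonneg_eq_0_iff) auto
  have edge: "w a = w b" if "a < n" "b < n" "A $$ (a,b) \<noteq> 0" for a b
    using d0[of a b] x[of a] x[of b] that by (simp add: d_def)
  have "w i = w j"
    by (rule irreducible_mat_propagate[OF A irr _ i j, of "\<lambda>a. w i = w a"]) (use edge in auto)
  then show ?thesis
    by (simp add: w_def)
qed

lemma eigen_of_add_transpose_eigen_supervector: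
  fixes A :: "real mat" and x :: "nat \<Rightarrow> real"
  assumes x: "\<And>i. i < n \<Longrightarrow> 0 < x i"
    and eig: "\<And>i. i < n \<Longrightarrow> (\<Sum>j<n. (A $$ (i,j) + A $$ (j,i)) * x j) = 2 * c * x i"
    and super: "\<And>i. i < n \<Longrightarrow> c * x i \<le> (\<Sum>j<n. A $$ (i,j) * x j)"
    and i: "i < n"
  shows "(\<Sum>j<n. A $$ (i,j) * x j) = c * x i"
proof -
  define e where "e i = (\<Sum>j<n. A $$ (i,j) * x j) - c * x i" for i
  have e_nonneg: "0 \<le> x a * e a" if "a < n" for a
    using x[OF that] super[OF that] by (simp add: e_def less_imp_le)
  have "(\<Sum>a<n. x a * e a) = quadratic_form n A x - c * (\<Sum>a<n. (x a)^2)"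
    by (simp add: e_def quadratic_form_def right_diff_distrib sum_subtractf sum_distrib_left
        power2_eq_square mult_ac)
  also have "\<dots> = 0"
    using quadratic_form_eq_of_add_transpose_eigen[of n x A c] x eig by (simp add: less_imp_neq[symmetric])
  finally have "x i * e i = 0"
    using e_nonneg i by (subst (asm) sum_nonneg_eq_0_iff) auto
  then show ?thesis
    using x[OF i] by (simp add: e_def)
qed

lemma eigenvector_of_add_transpose_eigenvector:
  fixes A :: "real mat"
  assumes A: "A \<in> carrier_mat n n" and nn: "nonneg_mat A" and irr: "irreducible_mat A"
    and v: "v \<in> carrier_vec n" and pos: "\<And>i. i < n \<Longrightarrow> 0 < v $ i"
    and Sv: "(A + A\<^sup>T) *\<^sub>v v = (2 * c) \<cdot>\<^sub>v v"
    and r: "real_spectral_radius A = c"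
  shows "A *\<^sub>v v = c \<cdot>\<^sub>v v"
proof -
  have eig: "(\<Sum>j<n. (A $$ (i,j) + A $$ (j,i)) * v $ j) = 2 * c * v $ i" if "i < n" for i
    using Sv A v that by (simp add: add_transpose_mult_vec_eq_smult_iff)
  obtain y k where k: "k < n" "y k \<noteq> 0" and y_nonneg: "\<And>i. 0 \<le> y i"
    and sub: "\<And>i. i < n \<Longrightarrow> c * y i \<le> (\<Sum>j<n. A $$ (i,j) * y j)"
    using nonneg_mat_spectral_radius_subinvariant[OF A nn irreducible_mat_dim_pos[OF irr A]] r
    by metis
  have "c * (\<Sum>i<n. (y i)^2) = (\<Sum>i<n. y i * (c * y i))"
    by (simp add: sum_distrib_left power2_eq_square mult_ac)
  also have "\<dots> \<le> (\<Sum>i<n. y i * (\<Sum>j<n. A $$ (i,j) * y j))"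
    using sub y_nonneg by (intro sum_mono mult_left_mono) auto
  also have "\<dots> = quadratic_form n A y"
    by (simp add: quadratic_form_def sum_distrib_left mult_ac)
  finally have "c * (\<Sum>i<n. (y i)^2) \<le> quadratic_form n A y" .
  then have ratio: "y i / v $ i = y k / v $ k" if "i < n" for i
    using ratio_constant_of_add_transpose_eigen[OF A nn irr pos eig _ that k(1)] by simp
  define \<kappa> where "\<kappa> = y k / v $ k"
  have "0 < \<kappa>"
    using k y_nonneg[of k] pos[OF k(1)] by (simp add: \<kappa>_def)
  have y: "y i = \<kappa> * v $ i" if "i < n" for i
    using ratio[OF that] pos[OF that] by (simp add: \<kappa>_def field_simps)
  have "c * v $ i \<le> (\<Sum>j<n. A $$ (i,j) * v $ j)" if "i < n" for i
    using sub[OF that] \<open>0 < \<kappa>\<close> by (simp add: y that sum_distrib_left[symmetric] mult.left_commute)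
  then show ?thesis
    using eigen_of_add_transpose_eigen_supervector[of n "\<lambda>i. v $ i" A c] pos eig A v
    by (simp add: mult_mat_vec_eq_smult_iff)
qed

lemma transpose_combination_eigen_iff:
  fixes A :: "real mat"
  assumes A: "A \<in> carrier_mat n n" and v: "v \<in> carrier_vec n"
    and Sv: "(A + A\<^sup>T) *\<^sub>v v = (2 * c) \<cdot>\<^sub>v v"
  shows "((1 - t) \<cdot>\<^sub>m A + t \<cdot>\<^sub>m A\<^sup>T) *\<^sub>v v = c \<cdot>\<^sub>v v \<longleftrightarrow> t = 1/2 \<or> (A - A\<^sup>T) *\<^sub>v v = 0\<^sub>v n"
proof -
  define d where "d i = (A *\<^sub>v v) $ i - c * v $ i" for i
  have Atv: "(A\<^sup>T *\<^sub>v v) $ i = c * v $ i - d i" if "i < n" for i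
    using arg_cong[OF Sv, of "\<lambda>w. w $ i"] add_transpose_mult_vec_nth(1)[OF A v that] v that
    by (simp add: d_def)
  have "((1 - t) \<cdot>\<^sub>m A + t \<cdot>\<^sub>m A\<^sup>T) *\<^sub>v v = c \<cdot>\<^sub>v v \<longleftrightarrow> (\<forall>i<n. (1 - 2 * t) * d i = 0)"
    using A v by (auto simp: vec_eq_iff transpose_combination_mult_vec_nth Atv d_def algebra_simps
        simp del: index_mult_mat_vec)
  also have "\<dots> \<longleftrightarrow> t = 1/2 \<or> (\<forall>i<n. d i = 0)"
    by auto
  also have "(\<forall>i<n. d i = 0) \<longleftrightarrow> (A - A\<^sup>T) *\<^sub>v v = 0\<^sub>v n"
    using A v by (auto simp: vec_eq_iff add_transpose_mult_vec_nth(2) Atv d_def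
        simp del: index_mult_mat_vec)
  finally show ?thesis .
qed

lemma real_spectral_radius_transpose_combination:
  fixes A :: "real mat"
  assumes A: "A \<in> carrier_mat n n" and nn: "nonneg_mat A" and n: "0 < n"
    and v: "v \<in> carrier_vec n" and pos: "\<And>i. i < n \<Longrightarrow> 0 < v $ i"
    and Sv: "(A + A\<^sup>T) *\<^sub>v v = (2 * c) \<cdot>\<^sub>v v"
    and t: "t \<in> {0..1}" and eigen: "t = 1/2 \<or> (A - A\<^sup>T) *\<^sub>v v = 0\<^sub>v n"
  shows "real_spectral_radius ((1 - t) \<cdot>\<^sub>m A + t \<cdot>\<^sub>m A\<^sup>T) = c"
  using real_spectral_radius_eq_positive_eigenvalue[OF _ nonneg_mat_transpose_combination[OF A nn t] v pos _ n]
    transpose_combination_eigen_iff[OF A v Sv] eigen A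
  by simp

theorem theorem6:
  fixes A :: "real mat" and n :: nat
  assumes "A \<in> carrier_mat n n"
    and "nonneg_mat A"
    and "irreducible_mat A"
  shows "(\<forall>s \<in> {0..1}. \<forall>t \<in> {0..1}.
            real_spectral_radius ((1 - s) \<cdot>\<^sub>m A + s \<cdot>\<^sub>m A\<^sup>T)
          = real_spectral_radius ((1 - t) \<cdot>\<^sub>m A + t \<cdot>\<^sub>m A\<^sup>T))
     \<longleftrightarrow> (\<forall>v. perron_vector (A + A\<^sup>T) v \<longrightarrow> (A - A\<^sup>T) *\<^sub>v v = 0\<^sub>v n)"
proof -
  note A = assms(1) and nn = assms(2) and irr = assms(3)
  have n: "0 < n"
    using irreducible_mat_dim_pos[OF irr A] .
  define c where "c = real_spectral_radius (A + A\<^sup>T) / 2"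
  have perron: "v \<in> carrier_vec n" "\<And>i. i < n \<Longrightarrow> 0 < v $ i" "(A + A\<^sup>T) *\<^sub>v v = (2 * c) \<cdot>\<^sub>v v"
    if "perron_vector (A + A\<^sup>T) v" for v
    using that A unfolding perron_vector_def c_def by auto
  obtain v0 where v0: "perron_vector (A + A\<^sup>T) v0"
    using perron_vector_exists_symmetric[of "A + A\<^sup>T" n] nonneg_irreducible_add_transpose[OF A nn irr] A
    by (auto simp: transpose_add comm_add_mat)
  note radius = real_spectral_radius_transpose_combination[OF A nn n perron[OF v0]]
  have A0: "(1 - 0) \<cdot>\<^sub>m A + 0 \<cdot>\<^sub>m A\<^sup>T = A"
    using A by auto
  show ?thesis (is "?const_radius \<longleftrightarrow> ?kernel")
  proof
    assume const: ?const_radius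
    show ?kernel
    proof (intro allI impI)
      fix v assume v: "perron_vector (A + A\<^sup>T) v"
      have "real_spectral_radius A = c"
        using const[rule_format, of 0 "1/2"] radius[of "1/2"] A0 by simp
      then have "A *\<^sub>v v = c \<cdot>\<^sub>v v"
        using eigenvector_of_add_transpose_eigenvector[OF A nn irr perron[OF v]] by blast
      then show "(A - A\<^sup>T) *\<^sub>v v = 0\<^sub>v n"
        using transpose_combination_eigen_iff[OF A perron(1,3)[OF v], of 0] A0 by simp
    qed
  next
    assume ?kernel
    then show ?const_radius
      using radius v0 by simp
  qed
qed

end
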